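(* Let $n$ be such that $n/2$ is odd, let $\Omega\subseteq\mathbb{R}^n$ be open, let $\lambda\in\mathbb{C}\setminus\{0\}$, and let $\underline{f}$ be a vector-valued function on $\Omega$; set $u=\partial_{\underline{x}}\underline{f}-\underline{f}^2$. Then any scalar-valued solution $\phi$ of the equation $(-\Delta_n+u)\phi=\lambda^2\phi$ (meaning $-\Delta_n\phi+\phi\,u=\lambda^2\phi$) can be uniquely represented as $\phi=g+h$, where $g$ and $h$ are $\mathbb{C}_n$-valued solutions of \[\left(\partial_{\underline{x}}+M^{\underline{f}-\lambda ie_N}\right)g=0\quad\text{and}\quad\left(\partial_{\underline{x}}+M^{\underline{f}+\lambda ie_N}\right)h=0\] respectively.
   Context: $\mathbb{R}_{0,n}$ is the real Clifford algebra generated by an orthonormal basis $e_1,\dots,e_n$ of $\mathbb{R}^n$ with relations $e_je_k+e_ke_j=-2\delta_{jk}$; $\mathbb{C}_n=\mathbb{R}_{0,n}\otimes\mathbb{C}$, with $i$ the complex unit. $e_N=e_1e_2\cdots e_n$ is the pseudo-scalar. The Dirac operator is $\partial_{\underline{x}}=\sum_{j=1}^n e_j\partial_{x_j}$, acting from the left; $\Delta_n=-\partial_{\underline{x}}^2$ is the Laplacian. For a function $F$, $M^F$ is right multiplication: $M^Fg=gF$. *)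

theory Defs
  imports "HOL-Analysis.Analysis" "HOL-Library.Function_Algebras"
begin

text \<open>The complex Clifford algebra C_n = R_{0,n} (x) C, with the generators indexed by a
finite linearly ordered type 'n (so n = CARD('n), and e_1,...,e_n are listed in the order
of 'n).  An element is given by its coefficients w.r.t. the blade basis e_A, A a subset of
the index set; e_A = e_{a_1} ... e_{a_k} for a_1 < ... < a_k.  Addition, subtraction and
zero are pointwise (Function_Algebras); the Clifford product is cl_mult.\<close>

type_synonym 'n cl = "'n set \<Rightarrow> complex"

text \<open>Sign in e_A e_B = sign(A,B) e_{A symdiff B}, using e_j e_k = - e_k e_j (j ~= k) and e_j^2 = -1.\<close>
definition cl_sign :: "'n::{finite,linorder} set \<Rightarrow> 'n set \<Rightarrow> complex" where
  "cl_sign A B = (-1) ^ (card {(a, b). a \<in> A \<and> b \<in> B \<and> b < a} + card (A \<inter> B))"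

definition cl_mult :: "'n::{finite,linorder} cl \<Rightarrow> 'n cl \<Rightarrow> 'n cl" where
  "cl_mult a b = (\<lambda>C. \<Sum>A\<in>UNIV. \<Sum>B\<in>UNIV.
      if (A - B) \<union> (B - A) = C then cl_sign A B * a A * b B else 0)"

definition cl_blade :: "complex \<Rightarrow> 'n set \<Rightarrow> 'n cl" where
  "cl_blade c A0 = (\<lambda>A. if A = A0 then c else 0)"

definition cl_scalar :: "complex \<Rightarrow> 'n cl" where
  "cl_scalar c = cl_blade c {}"

definition cl_e :: "'n \<Rightarrow> 'n cl" where
  "cl_e j = cl_blade 1 {j}"

definition cl_eN :: "'n cl" where
  "cl_eN = cl_blade 1 UNIV"

definition cl_vec :: "(real, 'n::finite) vec \<Rightarrow> 'n cl" where
  "cl_vec v = (\<lambda>A. \<Sum>j\<in>UNIV. if A = {j} then complex_of_real (v $ j) else 0)"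

definition pd :: "'n \<Rightarrow> (real ^ 'n::finite \<Rightarrow> complex) \<Rightarrow> real ^ 'n \<Rightarrow> complex" where
  "pd j F x = frechet_derivative F (at x) (axis j 1)"

definition C1_on :: "(real ^ 'n::finite) set \<Rightarrow> (real ^ 'n \<Rightarrow> complex) \<Rightarrow> bool" where
  "C1_on \<Omega> F \<longleftrightarrow> (\<forall>x\<in>\<Omega>. F differentiable (at x)) \<and> (\<forall>j. continuous_on \<Omega> (pd j F))"

definition C2_on :: "(real ^ 'n::finite) set \<Rightarrow> (real ^ 'n \<Rightarrow> complex) \<Rightarrow> bool" where
  "C2_on \<Omega> F \<longleftrightarrow> C1_on \<Omega> F \<and> (\<forall>j. C1_on \<Omega> (pd j F))"

definition cl_C1_on :: "(real ^ 'n::finite) set \<Rightarrow> (real ^ 'n \<Rightarrow> 'n cl) \<Rightarrow> bool" where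
  "cl_C1_on \<Omega> G \<longleftrightarrow> (\<forall>A. C1_on \<Omega> (\<lambda>x. G x A))"

definition dirac :: "((real, 'n::{finite,linorder}) vec \<Rightarrow> 'n cl) \<Rightarrow> (real, 'n) vec \<Rightarrow> 'n cl" where
  "dirac G x = (\<Sum>j\<in>UNIV. cl_mult (cl_e j) (\<lambda>A. pd j (\<lambda>y. G y A) x))"

definition laplacian :: "(real ^ 'n::finite \<Rightarrow> complex) \<Rightarrow> real ^ 'n \<Rightarrow> complex" where
  "laplacian F x = (\<Sum>j\<in>UNIV. pd j (pd j F) x)"

end

theory Submission
  imports Defs
begin

text \<open>Put \<open>W = \<partial>\<phi> + \<phi> f\<close>.  Because \<open>u = \<partial>f - f\<^sup>2\<close>, the Schroedinger equation says exactly that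
  \<open>\<partial>W = \<lambda>\<^sup>2 \<phi> + W f\<close>; here \<open>\<partial>\<^sup>2 = -\<Delta>\<close> is used, which rests on the symmetry of second derivatives.
  For \<open>n\<close> even the element \<open>E = i e\<^sub>N\<close> anticommutes with vectors, and for \<open>n/2\<close> odd it satisfies
  \<open>E\<^sup>2 = 1\<close>.  Consequently \<open>g = (\<phi> + \<lambda>\<^sup>-\<^sup>1 W E)/2\<close> and \<open>h = (\<phi> - \<lambda>\<^sup>-\<^sup>1 W E)/2\<close> solve the two
  twisted Dirac equations and add up to \<open>\<phi>\<close>.  For uniqueness, the difference \<open>k\<close> of two choices of
  \<open>g\<close> solves \<open>\<partial>k + k (f - \<lambda>E) = 0\<close> as well as \<open>\<partial>k + k (f + \<lambda>E) = 0\<close>, whence \<open>2\<lambda> k E = 0\<close> and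
  \<open>k = 0\<close>.\<close>

section \<open>The Clifford product\<close>

text \<open>An opaque copy of the library abbreviation \<open>sym_diff\<close>, so that the simplifier does
  not unfold the index sets of blades into set differences.\<close>

definition symdiff :: "'a set \<Rightarrow> 'a set \<Rightarrow> 'a set" where
  "symdiff A B = sym_diff A B"

lemma symdiff_eq_iff: "symdiff A B = D \<longleftrightarrow> B = symdiff A D"
  unfolding symdiff_def by blast

lemma symdiff_cancel_left [simp]: "symdiff A (symdiff A B) = B"
  unfolding symdiff_def by blast

lemma symdiff_commute: "symdiff A B = symdiff B A"
  unfolding symdiff_def by blast

lemma symdiff_simps [simp]: "symdiff {} A = A" "symdiff A {} = A" "symdiff A A = {}"
  unfolding symdiff_def by auto

lemma symdiff_Int_left: "symdiff A B \<inter> C = symdiff (A \<inter> C) (B \<inter> C)"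
  unfolding symdiff_def by auto

lemma symdiff_Int_right: "A \<inter> symdiff B C = symdiff (A \<inter> B) (A \<inter> C)"
  unfolding symdiff_def by auto

lemma neg_one_power_card_symdiff:
  assumes "finite X" "finite Y"
  shows "(-1::'a::comm_ring_1) ^ card (symdiff X Y) = (-1) ^ card X * (-1) ^ card Y"
proof -
  have "card (symdiff X Y) = card (X - Y) + card (Y - X)"
    unfolding symdiff_def using assms by (intro card_Un_disjoint) auto
  moreover have "card X = card (X \<inter> Y) + card (X - Y)" "card Y = card (X \<inter> Y) + card (Y - X)"
    using assms card_Int_Diff[of X Y] card_Int_Diff[of Y X] by (simp_all add: Int_commute)
  moreover have "((-1::'a) ^ card (X \<inter> Y))\<^sup>2 = 1"
    by (simp flip: power_mult add: mult.commute)
  ultimately show ?thesis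
    by (simp add: power_add power2_eq_square algebra_simps)
qed

lemma sum_apply: "(\<Sum>i\<in>I. f i) x = (\<Sum>i\<in>I. f i x)"
  by (induction I rule: infinite_finite_induct) auto

lemma cl_mult_apply:
  fixes a b :: "'n::{finite,linorder} cl"
  shows "cl_mult a b D = (\<Sum>A\<in>UNIV. cl_sign A (symdiff A D) * a A * b (symdiff A D))"
proof -
  have "cl_mult a b D
      = (\<Sum>A\<in>UNIV. \<Sum>B\<in>UNIV. if B = symdiff A D then cl_sign A B * a A * b B else 0)"
    unfolding cl_mult_def by (intro sum.cong refl) (metis symdiff_def symdiff_eq_iff)
  then show ?thesis
    by (simp add: sum.delta')
qed

definition inversion_pairs :: "'n::linorder set \<Rightarrow> 'n set \<Rightarrow> ('n \<times> 'n) set" where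
  "inversion_pairs A B = {(a, b). a \<in> A \<and> b \<in> B \<and> b < a}"

lemma cl_sign_eq: "cl_sign A B = (-1) ^ card (inversion_pairs A B) * (-1) ^ card (A \<inter> B)"
  unfolding cl_sign_def inversion_pairs_def by (simp add: power_add)

lemma cl_sign_symdiff_left:
  fixes A B C :: "'n::{finite,linorder} set"
  shows "cl_sign (symdiff A B) C = cl_sign A C * cl_sign B C"
proof -
  have "inversion_pairs (symdiff A B) C = symdiff (inversion_pairs A C) (inversion_pairs B C)"
    unfolding inversion_pairs_def symdiff_def by auto
  then show ?thesis
    unfolding cl_sign_eq symdiff_Int_left
    by (simp only: neg_one_power_card_symdiff finite) (simp only: ac_simps)
qed

lemma cl_sign_symdiff_right:
  fixes A B C :: "'n::{finite,linorder} set"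
  shows "cl_sign A (symdiff B C) = cl_sign A B * cl_sign A C"
proof -
  have "inversion_pairs A (symdiff B C) = symdiff (inversion_pairs A B) (inversion_pairs A C)"
    unfolding inversion_pairs_def symdiff_def by auto
  then show ?thesis
    unfolding cl_sign_eq symdiff_Int_right
    by (simp only: neg_one_power_card_symdiff finite) (simp only: ac_simps)
qed

lemma cl_sign_empty [simp]: "cl_sign {} B = 1" "cl_sign A {} = 1"
  unfolding cl_sign_def by auto

lemma cl_sign_mult_self [simp]: "cl_sign A B * cl_sign A B = 1"
  unfolding cl_sign_def by (simp flip: power_mult_distrib)

lemma cl_mult_assoc:
  fixes a b c :: "'n::{finite,linorder} cl"
  shows "cl_mult (cl_mult a b) c = cl_mult a (cl_mult b c)"
proof
  fix D :: "'n set"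
  let ?s = "\<lambda>A B. cl_sign A (symdiff A B)"
  have "cl_mult (cl_mult a b) c D
      = (\<Sum>X\<in>UNIV. \<Sum>A\<in>UNIV. ?s X D * (?s A X * a A * b (symdiff A X)) * c (symdiff X D))"
    unfolding cl_mult_apply[of "cl_mult a b"] cl_mult_apply[of a b]
    by (simp add: sum_distrib_left sum_distrib_right)
  also have "\<dots> = (\<Sum>A\<in>UNIV. \<Sum>X\<in>UNIV. ?s X D * (?s A X * a A * b (symdiff A X)) * c (symdiff X D))"
    by (rule sum.swap)
  also have "\<dots> = (\<Sum>A\<in>UNIV. \<Sum>B\<in>UNIV. ?s (symdiff A B) D * (cl_sign A B * a A * b B)
                                          * c (symdiff (symdiff A B) D))"
  proof (rule sum.cong[OF refl])
    fix A :: "'n set"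
    show "(\<Sum>X\<in>UNIV. ?s X D * (?s A X * a A * b (symdiff A X)) * c (symdiff X D))
      = (\<Sum>B\<in>UNIV. ?s (symdiff A B) D * (cl_sign A B * a A * b B) * c (symdiff (symdiff A B) D))"
      by (rule sum.reindex_bij_witness[where i="symdiff A" and j="symdiff A"]) auto
  qed
  also have "\<dots> = (\<Sum>A\<in>UNIV. \<Sum>B\<in>UNIV. ?s A D * a A * (?s B (symdiff A D) * b B * c (symdiff B (symdiff A D))))"
  proof (intro sum.cong refl)
    fix A B :: "'n set"
    have "symdiff (symdiff A B) D = symdiff B (symdiff A D)"
      unfolding symdiff_def by blast
    then show "?s (symdiff A B) D * (cl_sign A B * a A * b B) * c (symdiff (symdiff A B) D)
        = ?s A D * a A * (?s B (symdiff A D) * b B * c (symdiff B (symdiff A D)))"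
      by (simp add: cl_sign_symdiff_left cl_sign_symdiff_right algebra_simps)
  qed
  also have "\<dots> = cl_mult a (cl_mult b c) D"
    unfolding cl_mult_apply[of a] cl_mult_apply[of b c]
    by (simp add: sum_distrib_left sum_distrib_right mult.assoc)
  finally show "cl_mult (cl_mult a b) c D = cl_mult a (cl_mult b c) D" .
qed

definition cl_smul :: "complex \<Rightarrow> 'n cl \<Rightarrow> 'n cl" where
  "cl_smul c a = (\<lambda>A. c * a A)"

context
  fixes a b c :: "'n::{finite,linorder} cl"
begin

lemma cl_mult_add_left: "cl_mult (a + b) c = cl_mult a c + cl_mult b c"
  by (rule ext) (simp add: cl_mult_apply sum.distrib[symmetric] algebra_simps)

lemma cl_mult_add_right: "cl_mult a (b + c) = cl_mult a b + cl_mult a c"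
  by (rule ext) (simp add: cl_mult_apply sum.distrib[symmetric] algebra_simps)

lemma cl_mult_diff_left: "cl_mult (a - b) c = cl_mult a c - cl_mult b c"
  by (rule ext) (simp add: cl_mult_apply sum_subtractf[symmetric] algebra_simps)

lemma cl_mult_diff_right: "cl_mult a (b - c) = cl_mult a b - cl_mult a c"
  by (rule ext) (simp add: cl_mult_apply sum_subtractf[symmetric] algebra_simps)

lemma cl_mult_minus_left: "cl_mult (- a) c = - cl_mult a c"
  by (rule ext) (simp add: cl_mult_apply sum_negf[symmetric])

lemma cl_mult_minus_right: "cl_mult a (- c) = - cl_mult a c"
  by (rule ext) (simp add: cl_mult_apply sum_negf[symmetric])

lemma cl_mult_zero [simp]: "cl_mult 0 c = 0" "cl_mult a 0 = 0"
  by (rule ext, simp add: cl_mult_apply)+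

lemma cl_mult_smul_left: "cl_mult (cl_smul k a) c = cl_smul k (cl_mult a c)"
  by (rule ext) (simp add: cl_mult_apply cl_smul_def sum_distrib_left algebra_simps)

lemma cl_mult_smul_right: "cl_mult a (cl_smul k c) = cl_smul k (cl_mult a c)"
  by (rule ext) (simp add: cl_mult_apply cl_smul_def sum_distrib_left algebra_simps)

end

lemma cl_mult_sum_left:
  fixes c :: "'n::{finite,linorder} cl"
  shows "cl_mult (\<Sum>i\<in>I. f i) c = (\<Sum>i\<in>I. cl_mult (f i) c)"
  by (rule ext) (simp add: cl_mult_apply sum_apply sum_distrib_left sum_distrib_right sum.swap[of _ I])

lemma cl_mult_sum_right:
  fixes c :: "'n::{finite,linorder} cl"
  shows "cl_mult c (\<Sum>i\<in>I. f i) = (\<Sum>i\<in>I. cl_mult c (f i))"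
  by (rule ext) (simp add: cl_mult_apply sum_apply sum_distrib_left sum_distrib_right sum.swap[of _ I])

lemma cl_smul_add: "cl_smul k (a + b) = cl_smul k a + cl_smul k b"
  by (rule ext) (simp add: cl_smul_def algebra_simps)

lemma cl_smul_diff: "cl_smul k (a - b) = cl_smul k a - cl_smul k b"
  by (rule ext) (simp add: cl_smul_def algebra_simps)

lemma cl_smul_zero [simp]: "cl_smul 0 a = 0" "cl_smul k 0 = 0"
  by (rule ext, simp add: cl_smul_def)+

lemma cl_smul_minus: "cl_smul k (- a) = - cl_smul k a"
  by (rule ext) (simp add: cl_smul_def)

lemma cl_smul_sum: "cl_smul k (\<Sum>i\<in>I. f i) = (\<Sum>i\<in>I. cl_smul k (f i))"
  by (rule ext) (simp add: cl_smul_def sum_apply sum_distrib_left)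

lemma cl_smul_scalar: "cl_smul k (cl_scalar c) = cl_scalar (k * c)"
  by (rule ext) (simp add: cl_scalar_def cl_blade_def cl_smul_def)

lemma cl_mult_blade:
  fixes A B :: "'n::{finite,linorder} set"
  shows "cl_mult (cl_blade a A) (cl_blade b B) = cl_blade (cl_sign A B * a * b) (symdiff A B)"
proof
  fix D
  have "cl_mult (cl_blade a A) (cl_blade b B) D
      = (\<Sum>X\<in>UNIV. if X = A then cl_sign A (symdiff A D) * a * cl_blade b B (symdiff A D) else 0)"
    unfolding cl_mult_apply by (intro sum.cong refl) (simp add: cl_blade_def)
  also have "\<dots> = cl_sign A (symdiff A D) * a * cl_blade b B (symdiff A D)"
    by simp
  also have "\<dots> = cl_blade (cl_sign A B * a * b) (symdiff A B) D"
    unfolding cl_blade_def by (auto simp: symdiff_eq_iff)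
  finally show "cl_mult (cl_blade a A) (cl_blade b B) D = cl_blade (cl_sign A B * a * b) (symdiff A B) D" .
qed

lemma cl_mult_scalar_left:
  fixes x :: "'n::{finite,linorder} cl"
  shows "cl_mult (cl_scalar c) x = cl_smul c x"
proof
  fix D
  show "cl_mult (cl_scalar c) x D = cl_smul c x D"
    unfolding cl_mult_apply cl_scalar_def cl_smul_def cl_blade_def
    by (simp add: if_distrib if_distribR cong: if_cong)
qed

lemma cl_mult_scalar_right:
  fixes x :: "'n::{finite,linorder} cl"
  shows "cl_mult x (cl_scalar c) = cl_smul c x"
proof
  fix D
  have "cl_mult x (cl_scalar c) D = (\<Sum>A\<in>UNIV. if A = D then x A * c else 0)"
    unfolding cl_mult_apply cl_scalar_def cl_blade_def
    by (intro sum.cong refl) (auto simp: symdiff_def)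
  then show "cl_mult x (cl_scalar c) D = cl_smul c x D"
    by (simp add: cl_smul_def)
qed

lemma cl_scalar_zero [simp]: "cl_scalar 0 = 0"
  by (rule ext) (simp add: cl_scalar_def cl_blade_def)

lemma cl_scalar_add: "cl_scalar (a + b) = cl_scalar a + cl_scalar b"
  by (rule ext) (simp add: cl_scalar_def cl_blade_def)

lemma cl_scalar_sum: "cl_scalar (\<Sum>i\<in>I. f i) = (\<Sum>i\<in>I. cl_scalar (f i))"
  by (rule ext) (simp add: cl_scalar_def cl_blade_def sum_apply)

lemma cl_vec_eq_sum: "cl_vec v = (\<Sum>j\<in>UNIV. cl_smul (complex_of_real (v $ j)) (cl_e j))"
  by (rule ext) (auto simp: cl_vec_def cl_smul_def cl_e_def cl_blade_def sum_apply intro!: sum.cong)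

lemma cl_sign_singleton: "cl_sign {j} {k} = (if k \<le> j then -1 else 1)"
proof -
  have inversions: "{(a, b). a \<in> {j} \<and> b \<in> {k} \<and> b < a} = (if k < j then {(j, k)} else {})"
    by auto
  have common: "{j} \<inter> {k} = (if j = k then {j} else {})"
    by auto
  show ?thesis
    unfolding cl_sign_def inversions common by (auto simp: less_le)
qed

lemma cl_blade_add: "cl_blade a A + cl_blade b A = cl_blade (a + b) A"
  unfolding cl_blade_def by auto

lemma cl_e_anticommute:
  fixes j k :: "'n::{finite,linorder}"
  shows "cl_mult (cl_e j) (cl_e k) + cl_mult (cl_e k) (cl_e j) = cl_scalar (if j = k then -2 else 0)"
proof -
  have "cl_mult (cl_e j) (cl_e k) + cl_mult (cl_e k) (cl_e j)
      = cl_blade (cl_sign {j} {k} + cl_sign {k} {j}) (symdiff {j} {k})"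
    unfolding cl_e_def cl_mult_blade cl_blade_add symdiff_commute[of "{k}"] by simp
  also have "\<dots> = cl_scalar (if j = k then -2 else 0)"
    unfolding cl_sign_singleton cl_scalar_def cl_blade_def by (auto simp: fun_eq_iff)
  finally show ?thesis .
qed

definition cl_ieN :: "'n cl" where
  "cl_ieN = cl_blade \<i> UNIV"

lemma card_less_plus_card_greater:
  fixes j :: "'n::{finite,linorder}"
  shows "card {b. b < j} + card {a. j < a} = CARD('n) - 1"
proof -
  have "UNIV - {j} = {b. b < j} \<union> {a. j < a}"
    by auto
  then have "card (UNIV - {j}) = card ({b. b < j} \<union> {a. j < a})"
    by simp
  also have "\<dots> = card {b. b < j} + card {a. j < a}"
    by (intro card_Un_disjoint) auto
  finally show ?thesis
    by simp
qed

lemma cl_e_mult_ieN: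
  fixes j :: "'n::{finite,linorder}"
  assumes "even CARD('n)"
  shows "cl_mult (cl_e j) cl_ieN = - cl_mult cl_ieN (cl_e j)"
proof -
  have "{(a, b). a = j \<and> b < a} = (\<lambda>b. (j, b)) ` {b. b < j}"
    by auto
  then have left: "card {(a, b). a = j \<and> b < a} = card {b. b < j}"
    by (simp add: card_image inj_on_def)
  have "{(a, b). b = j \<and> b < a} = (\<lambda>a. (a, j)) ` {a. j < a}"
    by auto
  then have right: "card {(a, b). b = j \<and> b < a} = card {a. j < a}"
    by (simp add: card_image inj_on_def)
  have "odd (card {b. b < j} + card {a. j < a})"
    using card_less_plus_card_greater[of j] assms by (simp add: Suc_leI)
  then have "cl_sign {j} UNIV * cl_sign UNIV {j} = -1"
    unfolding cl_sign_def using left right by (simp add: power_add[symmetric])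
  then have sign: "cl_sign {j} UNIV = - cl_sign UNIV {j}"
    by (metis cl_sign_mult_self minus_mult_left mult.left_neutral mult.assoc)
  show ?thesis
    unfolding cl_e_def cl_ieN_def cl_mult_blade
    by (rule ext) (simp add: cl_blade_def symdiff_commute sign)
qed

lemma cl_ieN_mult_vec:
  assumes "even CARD('n::{finite,linorder})"
  shows "cl_mult cl_ieN (cl_vec v) = - cl_mult (cl_vec v) (cl_ieN :: 'n cl)"
  unfolding cl_vec_eq_sum cl_mult_sum_left cl_mult_sum_right cl_mult_smul_left cl_mult_smul_right
  using cl_e_mult_ieN[OF assms] by (simp add: cl_smul_minus sum_negf)

lemma card_inversions_UNIV:
  "2 * card {(a, b::'n::{finite,linorder}). b < a} + CARD('n) = CARD('n) * CARD('n)"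
proof -
  let ?P = "{(a, b::'n). b < a}" and ?Q = "{(a, b::'n). a < b}" and ?D = "{(a, b::'n). a = b}"
  have pairs: "(UNIV :: ('n \<times> 'n) set) = ?P \<union> ?Q \<union> ?D"
    by auto
  have "CARD('n \<times> 'n) = card ?P + card ?Q + card ?D"
    unfolding pairs by (subst card_Un_disjoint, auto)+
  moreover have "?Q = (\<lambda>(a, b). (b, a)) ` ?P" "inj_on (\<lambda>(a, b). (b, a)) ?P"
    by (auto simp: inj_on_def)
  then have "card ?Q = card ?P"
    by (simp add: card_image)
  moreover have "?D = (\<lambda>a. (a, a)) ` UNIV"
    by auto
  then have "card ?D = CARD('n)"
    by (simp add: card_image inj_on_def)
  ultimately show ?thesis
    by (simp add: card_cartesian_product)
qed

text \<open>For \<open>n = 2m\<close> there are \<open>m (2m - 1)\<close> inversions among the \<open>n\<close> generators of \<open>e\<^sub>N\<close>;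
  for odd \<open>m\<close> this is odd, so that \<open>e\<^sub>N\<^sup>2 = -1\<close>.\<close>

lemma cl_ieN_square:
  assumes "even CARD('n::{finite,linorder})" and "odd (CARD('n) div 2)"
  shows "cl_mult (cl_ieN :: 'n cl) cl_ieN = cl_scalar 1"
proof -
  obtain m where m: "CARD('n) = 2 * m" "odd m"
    using assms by auto
  define X where "X = card {(a, b::'n). b < a}"
  have "X + m = 2 * m * m"
    using card_inversions_UNIV[where 'n='n] m unfolding X_def by simp
  then have "odd (X + CARD('n))"
    using m by (metis add.commute dvd_add_right_iff dvd_mult2 even_add even_mult_iff mult_2)
  then have "cl_sign (UNIV::'n set) UNIV = -1"
    unfolding cl_sign_def X_def by simp
  then show ?thesis
    unfolding cl_ieN_def cl_mult_blade cl_scalar_def by (simp add: symdiff_def)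
qed

section \<open>Partial derivatives\<close>

lemma pd_eq_derivative:
  assumes "(F has_derivative F') (at x)"
  shows "pd j F x = F' (axis j 1)"
  using assms unfolding pd_def by (metis frechet_derivative_at)

lemma pd_add:
  fixes F G :: "real ^ 'n::finite \<Rightarrow> complex"
  assumes "F differentiable (at x)" "G differentiable (at x)"
  shows "pd j (\<lambda>y. F y + G y) x = pd j F x + pd j G x"
  using pd_eq_derivative[OF has_derivative_add] assms
  by (simp add: pd_def frechet_derivative_works)

lemma pd_diff:
  fixes F G :: "real ^ 'n::finite \<Rightarrow> complex"
  assumes "F differentiable (at x)" "G differentiable (at x)"
  shows "pd j (\<lambda>y. F y - G y) x = pd j F x - pd j G x"
  using pd_eq_derivative[OF has_derivative_diff] assms
  by (simp add: pd_def frechet_derivative_works)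

lemma pd_mult:
  fixes F G :: "real ^ 'n::finite \<Rightarrow> complex"
  assumes "F differentiable (at x)" "G differentiable (at x)"
  shows "pd j (\<lambda>y. F y * G y) x = F x * pd j G x + pd j F x * G x"
  using pd_eq_derivative[OF has_derivative_mult] assms
  by (simp add: pd_def frechet_derivative_works)

lemma pd_const [simp]: "pd j (\<lambda>y. c) x = 0"
  unfolding pd_def by simp

lemma pd_cmult:
  fixes F :: "real ^ 'n::finite \<Rightarrow> complex"
  assumes "F differentiable (at x)"
  shows "pd j (\<lambda>y. c * F y) x = c * pd j F x"
  using pd_mult[of "\<lambda>y. c" x F j] assms by simp

lemma pd_sum:
  fixes F :: "'i \<Rightarrow> real ^ 'n::finite \<Rightarrow> complex"
  assumes "finite I" "\<And>i. i \<in> I \<Longrightarrow> F i differentiable (at x)"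
  shows "pd j (\<lambda>y. \<Sum>i\<in>I. F i y) x = (\<Sum>i\<in>I. pd j (F i) x)"
  using assms
proof (induction I rule: finite_induct)
  case (insert i I)
  have "pd j (\<lambda>y. \<Sum>i\<in>insert i I. F i y) x = pd j (\<lambda>y. F i y + (\<Sum>i\<in>I. F i y)) x"
    using insert by simp
  also have "\<dots> = pd j (F i) x + pd j (\<lambda>y. \<Sum>i\<in>I. F i y) x"
    using insert by (intro pd_add) (auto intro!: differentiable_sum)
  finally show ?case
    using insert by simp
qed simp

lemma pd_cong_open:
  fixes F G :: "real ^ 'n::finite \<Rightarrow> complex"
  assumes "open \<Omega>" "x \<in> \<Omega>" "\<And>y. y \<in> \<Omega> \<Longrightarrow> F y = G y"
  shows "pd j F x = pd j G x"
proof -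
  have "(F has_derivative D) (at x) \<longleftrightarrow> (G has_derivative D) (at x)" for D
    using has_derivative_transform_within_open[OF _ assms(1,2)] assms(3) by metis
  then show ?thesis
    unfolding pd_def frechet_derivative_def by simp
qed

lemma has_vector_derivative_pd_axis:
  fixes \<phi> :: "real ^ 'n::finite \<Rightarrow> complex"
  assumes "\<phi> differentiable (at (p + t *\<^sub>R axis j 1))"
  shows "((\<lambda>t. \<phi> (p + t *\<^sub>R axis j 1)) has_vector_derivative pd j \<phi> (p + t *\<^sub>R axis j 1)) (at t)"
proof -
  let ?D = "frechet_derivative \<phi> (at (p + t *\<^sub>R axis j 1))"
  have D: "(\<phi> has_derivative ?D) (at (p + t *\<^sub>R axis j 1))"
    using assms frechet_derivative_works by blast
  have "((\<lambda>t. p + t *\<^sub>R axis j 1) has_derivative (\<lambda>h. h *\<^sub>R axis j 1)) (at t)"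
    by (auto intro!: derivative_eq_intros)
  from has_derivative_compose[OF this D]
  have "((\<lambda>t. \<phi> (p + t *\<^sub>R axis j 1)) has_derivative (\<lambda>h. h *\<^sub>R ?D (axis j 1))) (at t)"
    by (simp add: o_def linear_cmul[OF has_derivative_linear[OF D]])
  then show ?thesis
    unfolding has_vector_derivative_def pd_def by simp
qed

lemma has_derivative_increment_bound:
  fixes g :: "'a::real_normed_vector \<Rightarrow> 'b::real_normed_vector"
  assumes "(g has_derivative L) (at x)" "norm u = 1" "norm v = 1" "\<epsilon> > 0"
  obtains d where "d > 0" "\<And>s t. 0 \<le> t \<Longrightarrow> t \<le> s \<Longrightarrow> s < d \<Longrightarrow>
    norm (g (x + s *\<^sub>R u + t *\<^sub>R v) - g (x + t *\<^sub>R v) - s *\<^sub>R L u) \<le> 3 * \<epsilon> * s"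
proof -
  obtain d where d: "d > 0" "\<And>y. norm (y - x) < d \<Longrightarrow> norm (g y - g x - L (y - x)) \<le> \<epsilon> * norm (y - x)"
    using assms(1,4) unfolding has_derivative_at_alt by blast
  have "norm (g (x + s *\<^sub>R u + t *\<^sub>R v) - g (x + t *\<^sub>R v) - s *\<^sub>R L u) \<le> 3 * \<epsilon> * s"
    if "0 \<le> t" "t \<le> s" "s < d / 2" for s t
  proof -
    let ?r = "\<lambda>w. g (x + w) - g x - L w"
    have lin: "linear L"
      using assms(1) by (rule has_derivative_linear)
    have "norm (s *\<^sub>R u + t *\<^sub>R v) \<le> 2 * s"
      using norm_triangle_ineq[of "s *\<^sub>R u" "t *\<^sub>R v"] assms(2,3) that by simp
    then have 1: "norm (?r (s *\<^sub>R u + t *\<^sub>R v)) \<le> \<epsilon> * (2 * s)"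
      using d(2)[of "x + (s *\<^sub>R u + t *\<^sub>R v)"] assms(4) that
      by (simp add: order_trans[OF _ mult_left_mono])
    have "norm (t *\<^sub>R v) \<le> s"
      using assms(3) that by simp
    then have 2: "norm (?r (t *\<^sub>R v)) \<le> \<epsilon> * s"
      using d(2)[of "x + t *\<^sub>R v"] assms(4) that
      by (simp add: order_trans[OF _ mult_left_mono])
    have "g (x + s *\<^sub>R u + t *\<^sub>R v) - g (x + t *\<^sub>R v) - s *\<^sub>R L u = ?r (s *\<^sub>R u + t *\<^sub>R v) - ?r (t *\<^sub>R v)"
      by (simp add: linear_add[OF lin] linear_cmul[OF lin] add.assoc)
    also have "norm \<dots> \<le> 3 * \<epsilon> * s"
      using norm_triangle_ineq4[of "?r (s *\<^sub>R u + t *\<^sub>R v)" "?r (t *\<^sub>R v)"] 1 2 by linarith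
    finally show ?thesis .
  qed
  moreover have "d / 2 > 0"
    using d(1) by simp
  ultimately show ?thesis
    using that by blast
qed

text \<open>The mean value inequality for \<open>t \<mapsto> \<phi> (x + w + t v) - \<phi> (x + t v)\<close> on \<open>[0, s]\<close>
  reduces a mixed second difference to increments of \<open>pd j \<phi>\<close>.\<close>

lemma second_difference_mean_value:
  fixes \<phi> :: "real ^ 'n::finite \<Rightarrow> complex" and j :: 'n
  defines "v \<equiv> axis j 1"
  assumes "0 < s"
    and diff: "\<And>t. t \<in> {0..s} \<Longrightarrow> \<phi> differentiable (at (x + w + t *\<^sub>R v)) \<and> \<phi> differentiable (at (x + t *\<^sub>R v))"
    and close: "\<And>t. t \<in> {0..s} \<Longrightarrow> norm (pd j \<phi> (x + w + t *\<^sub>R v) - pd j \<phi> (x + t *\<^sub>R v) - c) \<le> e"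
  shows "norm (\<phi> (x + w + s *\<^sub>R v) - \<phi> (x + w) - \<phi> (x + s *\<^sub>R v) + \<phi> x - s *\<^sub>R c) \<le> 3 * s * e"
proof -
  define H where "H t = \<phi> (x + w + t *\<^sub>R v) - \<phi> (x + t *\<^sub>R v)" for t
  define H' where "H' t = pd j \<phi> (x + w + t *\<^sub>R v) - pd j \<phi> (x + t *\<^sub>R v)" for t
  have "(H has_vector_derivative H' t) (at t within {0..s})" if "t \<in> {0..s}" for t
  proof -
    have "((\<lambda>t. \<phi> ((x + w) + t *\<^sub>R v)) has_vector_derivative pd j \<phi> ((x + w) + t *\<^sub>R v)) (at t)"
      "((\<lambda>t. \<phi> (x + t *\<^sub>R v)) has_vector_derivative pd j \<phi> (x + t *\<^sub>R v)) (at t)"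
      unfolding v_def using diff[OF that] by (auto intro: has_vector_derivative_pd_axis simp: v_def)
    then show ?thesis
      unfolding H_def H'_def by (rule has_vector_derivative_at_within[OF has_vector_derivative_diff])
  qed
  moreover have "norm (H' t - H' 0) \<le> 2 * e" if "t \<in> {0..s}" for t
  proof -
    have "norm (H' t - H' 0) \<le> norm (H' t - c) + norm (H' 0 - c)"
      using norm_triangle_ineq4[of "H' t - c" "H' 0 - c"] by simp
    then show ?thesis
      using close[OF that] close[of 0] \<open>0 < s\<close> unfolding H'_def by simp
  qed
  ultimately have "norm (H s - H 0 - (s - 0) *\<^sub>R H' 0) \<le> norm (s - 0) * (2 * e)"
    using \<open>0 < s\<close> by (intro vector_differentiable_bound_linearization[where S="{0..s}"])
      (simp_all add: closed_segment_eq_real_ivl)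
  then have linearization: "norm (H s - H 0 - s *\<^sub>R H' 0) \<le> 2 * s * e"
    using \<open>0 < s\<close> by simp
  have "norm (s *\<^sub>R H' 0 - s *\<^sub>R c) = s * norm (H' 0 - c)"
    using \<open>0 < s\<close> by (simp flip: scaleR_diff_right)
  also have "\<dots> \<le> s * e"
    using close[of 0] \<open>0 < s\<close> unfolding H'_def by (intro mult_left_mono) auto
  finally have initial_slope: "norm (s *\<^sub>R H' 0 - s *\<^sub>R c) \<le> s * e" .
  have split: "\<phi> (x + w + s *\<^sub>R v) - \<phi> (x + w) - \<phi> (x + s *\<^sub>R v) + \<phi> x - s *\<^sub>R c
      = (H s - H 0 - s *\<^sub>R H' 0) + (s *\<^sub>R H' 0 - s *\<^sub>R c)"
    unfolding H_def by simp
  show ?thesis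
    unfolding split
    using norm_triangle_ineq[of "H s - H 0 - s *\<^sub>R H' 0" "s *\<^sub>R H' 0 - s *\<^sub>R c"]
      linearization initial_slope by linarith
qed

lemma second_difference_approx:
  fixes \<phi> :: "real ^ 'n::finite \<Rightarrow> complex"
  assumes "open \<Omega>" "x \<in> \<Omega>" "\<forall>y\<in>\<Omega>. \<phi> differentiable (at y)"
    and "pd b \<phi> differentiable (at x)" and "\<epsilon> > 0"
  obtains \<delta> where "\<delta> > 0" "\<And>s. 0 < s \<Longrightarrow> s < \<delta> \<Longrightarrow>
    norm (\<phi> (x + s *\<^sub>R axis a 1 + s *\<^sub>R axis b 1) - \<phi> (x + s *\<^sub>R axis a 1)
          - \<phi> (x + s *\<^sub>R axis b 1) + \<phi> x - s\<^sup>2 *\<^sub>R pd a (pd b \<phi>) x) \<le> 9 * \<epsilon> * s\<^sup>2"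
proof -
  define u :: "real ^ 'n" where "u = axis a 1"
  define v :: "real ^ 'n" where "v = axis b 1"
  have unit: "norm u = 1" "norm v = 1"
    unfolding u_def v_def by simp_all
  define L where "L = frechet_derivative (pd b \<phi>) (at x)"
  have L: "(pd b \<phi> has_derivative L) (at x)"
    using assms(4) frechet_derivative_works L_def by blast
  obtain d where d: "d > 0" "\<And>s t. 0 \<le> t \<Longrightarrow> t \<le> s \<Longrightarrow> s < d \<Longrightarrow>
      norm (pd b \<phi> (x + s *\<^sub>R u + t *\<^sub>R v) - pd b \<phi> (x + t *\<^sub>R v) - s *\<^sub>R L u) \<le> 3 * \<epsilon> * s"
    using has_derivative_increment_bound[OF L unit assms(5)] by blast
  obtain r where r: "r > 0" "ball x r \<subseteq> \<Omega>"
    using assms(1,2) open_contains_ball by blast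
  have dist_add: "dist x (x + w) = norm w" for w
    by (metis add_diff_cancel_left' dist_commute dist_norm)
  have approx: "norm (\<phi> (x + s *\<^sub>R u + s *\<^sub>R v) - \<phi> (x + s *\<^sub>R u) - \<phi> (x + s *\<^sub>R v) + \<phi> x
          - s *\<^sub>R (s *\<^sub>R L u)) \<le> 3 * s * (3 * \<epsilon> * s)"
    if s: "0 < s" "s < min d (r / 2)" for s
    unfolding v_def
  proof (rule second_difference_mean_value[OF \<open>0 < s\<close>])
    fix t :: real
    assume "t \<in> {0..s}"
    then have "norm (s *\<^sub>R u + t *\<^sub>R v) \<le> 2 * s" "norm (t *\<^sub>R v) \<le> s"
      using norm_triangle_ineq[of "s *\<^sub>R u" "t *\<^sub>R v"] unit s by simp_all
    then have "x + (s *\<^sub>R u + t *\<^sub>R v) \<in> ball x r" "x + t *\<^sub>R v \<in> ball x r"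
      using s unfolding mem_ball dist_add by linarith+
    then show "\<phi> differentiable (at (x + s *\<^sub>R u + t *\<^sub>R axis b 1)) \<and> \<phi> differentiable (at (x + t *\<^sub>R axis b 1))"
      using r(2) assms(3) unfolding v_def by (auto simp: add.assoc)
    show "norm (pd b \<phi> (x + s *\<^sub>R u + t *\<^sub>R axis b 1) - pd b \<phi> (x + t *\<^sub>R axis b 1) - s *\<^sub>R L u)
        \<le> 3 * \<epsilon> * s"
      using d(2)[of t s] \<open>t \<in> {0..s}\<close> s unfolding v_def by simp
  qed
  have "pd a (pd b \<phi>) x = L u"
    unfolding pd_def[of a] L_def u_def by simp
  then have "norm (\<phi> (x + s *\<^sub>R axis a 1 + s *\<^sub>R axis b 1) - \<phi> (x + s *\<^sub>R axis a 1)
      - \<phi> (x + s *\<^sub>R axis b 1) + \<phi> x - s\<^sup>2 *\<^sub>R pd a (pd b \<phi>) x) \<le> 9 * \<epsilon> * s\<^sup>2"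
    if "0 < s" "s < min d (r / 2)" for s
    using approx[OF that] unfolding u_def v_def by (simp add: power2_eq_square mult_ac)
  moreover have "min d (r / 2) > 0"
    using d r by simp
  ultimately show ?thesis
    using that by blast
qed

lemma pd_commute:
  fixes \<phi> :: "real ^ 'n::finite \<Rightarrow> complex"
  assumes "open \<Omega>" "x \<in> \<Omega>" "\<forall>y\<in>\<Omega>. \<phi> differentiable (at y)"
    and "pd a \<phi> differentiable (at x)" "pd b \<phi> differentiable (at x)"
  shows "pd a (pd b \<phi>) x = pd b (pd a \<phi>) x"
proof (rule ccontr)
  let ?c1 = "pd a (pd b \<phi>) x" and ?c2 = "pd b (pd a \<phi>) x"
  assume "?c1 \<noteq> ?c2"
  define \<epsilon> where "\<epsilon> = norm (?c1 - ?c2) / 36"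
  have "\<epsilon> > 0"
    using \<open>?c1 \<noteq> ?c2\<close> by (simp add: \<epsilon>_def)
  obtain d1 d2 where "d1 > 0" "d2 > 0" and
    d1: "\<And>s. 0 < s \<Longrightarrow> s < d1 \<Longrightarrow>
      norm (\<phi> (x + s *\<^sub>R axis a 1 + s *\<^sub>R axis b 1) - \<phi> (x + s *\<^sub>R axis a 1)
          - \<phi> (x + s *\<^sub>R axis b 1) + \<phi> x - s\<^sup>2 *\<^sub>R ?c1) \<le> 9 * \<epsilon> * s\<^sup>2" and
    d2: "\<And>s. 0 < s \<Longrightarrow> s < d2 \<Longrightarrow>
      norm (\<phi> (x + s *\<^sub>R axis b 1 + s *\<^sub>R axis a 1) - \<phi> (x + s *\<^sub>R axis b 1)
          - \<phi> (x + s *\<^sub>R axis a 1) + \<phi> x - s\<^sup>2 *\<^sub>R ?c2) \<le> 9 * \<epsilon> * s\<^sup>2"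
    using second_difference_approx[OF assms(1-3) assms(5) \<open>\<epsilon> > 0\<close>, of a]
      second_difference_approx[OF assms(1-3) assms(4) \<open>\<epsilon> > 0\<close>, of b] by metis
  define s where "s = min d1 d2 / 2"
  have s: "0 < s" "s < d1" "s < d2"
    using \<open>d1 > 0\<close> \<open>d2 > 0\<close> by (auto simp: s_def)
  define \<Delta> where "\<Delta> = \<phi> (x + s *\<^sub>R axis a 1 + s *\<^sub>R axis b 1) - \<phi> (x + s *\<^sub>R axis a 1)
          - \<phi> (x + s *\<^sub>R axis b 1) + \<phi> x"
  have "norm (\<Delta> - s\<^sup>2 *\<^sub>R ?c1) \<le> 9 * \<epsilon> * s\<^sup>2" "norm (\<Delta> - s\<^sup>2 *\<^sub>R ?c2) \<le> 9 * \<epsilon> * s\<^sup>2"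
    using d1[OF s(1,2)] d2[OF s(1,3)] unfolding \<Delta>_def by (simp_all add: algebra_simps)
  then have "norm (s\<^sup>2 *\<^sub>R (?c1 - ?c2)) \<le> s\<^sup>2 * (18 * \<epsilon>)"
    using norm_triangle_ineq4[of "\<Delta> - s\<^sup>2 *\<^sub>R ?c2" "\<Delta> - s\<^sup>2 *\<^sub>R ?c1"]
    by (simp add: algebra_simps)
  then have "norm (?c1 - ?c2) \<le> 18 * \<epsilon>"
    using s by simp
  with \<open>\<epsilon> > 0\<close> show False
    unfolding \<epsilon>_def by simp
qed

lemma C1_onI:
  assumes "\<And>x. x \<in> \<Omega> \<Longrightarrow> F differentiable (at x)"
    and "\<And>j. continuous_on \<Omega> (D j)" and "\<And>j x. x \<in> \<Omega> \<Longrightarrow> pd j F x = D j x"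
  shows "C1_on \<Omega> F"
  unfolding C1_on_def using assms continuous_on_cong[of \<Omega> \<Omega> "pd _ F"] by metis

lemma C1_on_differentiable: "C1_on \<Omega> F \<Longrightarrow> x \<in> \<Omega> \<Longrightarrow> F differentiable (at x)"
  unfolding C1_on_def by blast

lemma C1_on_imp_continuous_on: "C1_on \<Omega> F \<Longrightarrow> continuous_on \<Omega> F"
  unfolding C1_on_def
  by (meson continuous_at_imp_continuous_on differentiable_imp_continuous_within)

lemma C1_on_const: "C1_on \<Omega> (\<lambda>x. c)"
  unfolding C1_on_def by simp

lemma C1_on_add:
  assumes "C1_on \<Omega> F" "C1_on \<Omega> G"
  shows "C1_on \<Omega> (\<lambda>x. F x + G x)"
  using assms C1_on_differentiable[OF assms(1)] C1_on_differentiable[OF assms(2)]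
  by (intro C1_onI[where D="\<lambda>j x. pd j F x + pd j G x"])
    (auto simp: pd_add C1_on_def intro!: continuous_on_add)

lemma C1_on_mult:
  assumes "C1_on \<Omega> F" "C1_on \<Omega> G"
  shows "C1_on \<Omega> (\<lambda>x. F x * G x)"
  using assms C1_on_differentiable[OF assms(1)] C1_on_differentiable[OF assms(2)]
    C1_on_imp_continuous_on[OF assms(1)] C1_on_imp_continuous_on[OF assms(2)]
  by (intro C1_onI[where D="\<lambda>j x. F x * pd j G x + pd j F x * G x"])
    (auto simp: pd_mult C1_on_def intro!: continuous_on_add continuous_on_mult)

lemma C1_on_sum:
  assumes "finite I" "\<And>i. i \<in> I \<Longrightarrow> C1_on \<Omega> (F i)"
  shows "C1_on \<Omega> (\<lambda>x. \<Sum>i\<in>I. F i x)"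
  using assms by (induction I rule: finite_induct) (simp_all add: C1_on_const C1_on_add)


section \<open>Derivatives of Clifford-valued functions\<close>

definition pd_cl :: "'n \<Rightarrow> (real ^ 'n::finite \<Rightarrow> 'n cl) \<Rightarrow> real ^ 'n \<Rightarrow> 'n cl" where
  "pd_cl j G x = (\<lambda>A. pd j (\<lambda>y. G y A) x)"

definition cl_differentiable :: "(real ^ 'n::finite \<Rightarrow> 'n cl) \<Rightarrow> real ^ 'n \<Rightarrow> bool" where
  "cl_differentiable G x \<longleftrightarrow> (\<forall>A. (\<lambda>y. G y A) differentiable (at x))"

lemma dirac_eq_sum_pd_cl: "dirac G x = (\<Sum>j\<in>UNIV. cl_mult (cl_e j) (pd_cl j G x))"
  unfolding dirac_def pd_cl_def by simp

lemma cl_C1_on_differentiable: "cl_C1_on \<Omega> G \<Longrightarrow> x \<in> \<Omega> \<Longrightarrow> cl_differentiable G x"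
  unfolding cl_C1_on_def cl_differentiable_def C1_on_def by blast

lemma cl_differentiable_const: "cl_differentiable (\<lambda>y. K) x"
  unfolding cl_differentiable_def by simp

lemma cl_differentiable_add:
  "cl_differentiable G x \<Longrightarrow> cl_differentiable H x \<Longrightarrow> cl_differentiable (\<lambda>y. G y + H y) x"
  unfolding cl_differentiable_def by simp

lemma cl_differentiable_smul:
  fixes G :: "real ^ 'n::finite \<Rightarrow> 'n cl"
  shows "a differentiable (at x) \<Longrightarrow> cl_differentiable G x \<Longrightarrow> cl_differentiable (\<lambda>y. cl_smul (a y) (G y)) x"
  unfolding cl_differentiable_def cl_smul_def by auto

lemma cl_differentiable_mult_const:
  fixes G :: "real ^ 'n::{finite,linorder} \<Rightarrow> 'n cl"
  shows "cl_differentiable G x \<Longrightarrow> cl_differentiable (\<lambda>y. cl_mult (G y) K) x"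
  unfolding cl_differentiable_def cl_mult_apply by (auto intro!: differentiable_sum differentiable_mult)

lemma cl_differentiable_scalar:
  assumes "a differentiable (at x)"
  shows "cl_differentiable (\<lambda>y. cl_scalar (a y)) x"
  unfolding cl_differentiable_def cl_scalar_def cl_blade_def
proof
  fix A :: "'n set"
  show "(\<lambda>y. if A = {} then a y else 0) differentiable (at x)"
    using assms by (cases "A = {}") simp_all
qed

lemma pd_cl_add:
  "cl_differentiable G x \<Longrightarrow> cl_differentiable H x \<Longrightarrow> pd_cl j (\<lambda>y. G y + H y) x = pd_cl j G x + pd_cl j H x"
  unfolding pd_cl_def cl_differentiable_def by (rule ext) (simp add: pd_add)

lemma pd_cl_diff:
  "cl_differentiable G x \<Longrightarrow> cl_differentiable H x \<Longrightarrow> pd_cl j (\<lambda>y. G y - H y) x = pd_cl j G x - pd_cl j H x"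
  unfolding pd_cl_def cl_differentiable_def by (rule ext) (simp add: pd_diff)

lemma pd_cl_smul:
  fixes G :: "real ^ 'n::finite \<Rightarrow> 'n cl"
  assumes "a differentiable (at x)" "cl_differentiable G x"
  shows "pd_cl j (\<lambda>y. cl_smul (a y) (G y)) x = cl_smul (pd j a x) (G x) + cl_smul (a x) (pd_cl j G x)"
  using assms unfolding pd_cl_def cl_smul_def cl_differentiable_def
  by (intro ext) (simp add: pd_mult algebra_simps)

lemma pd_cl_mult_const:
  fixes G :: "real ^ 'n::{finite,linorder} \<Rightarrow> 'n cl"
  assumes "cl_differentiable G x"
  shows "pd_cl j (\<lambda>y. cl_mult (G y) K) x = cl_mult (pd_cl j G x) K"
proof
  fix D
  let ?c = "\<lambda>A. cl_sign A (symdiff A D) * K (symdiff A D)"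
  have "pd j (\<lambda>y. \<Sum>A\<in>UNIV. ?c A * G y A) x = (\<Sum>A\<in>UNIV. ?c A * pd j (\<lambda>y. G y A) x)"
    using assms unfolding cl_differentiable_def by (simp add: pd_sum pd_cmult)
  then show "pd_cl j (\<lambda>y. cl_mult (G y) K) x D = cl_mult (pd_cl j G x) K D"
    unfolding pd_cl_def cl_mult_apply by (simp add: mult_ac)
qed

lemma pd_cl_const: "pd_cl j (\<lambda>y. K) x = 0"
  unfolding pd_cl_def by (rule ext) simp

lemma pd_cl_scalar: "pd_cl j (\<lambda>y. cl_scalar (a y)) x = cl_scalar (pd j a x)"
  unfolding pd_cl_def cl_scalar_def cl_blade_def by (rule ext) simp

lemma pd_cl_sum:
  fixes G :: "'i \<Rightarrow> real ^ 'n::finite \<Rightarrow> 'n cl"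
  assumes "finite I" "\<And>i. i \<in> I \<Longrightarrow> cl_differentiable (G i) x"
  shows "pd_cl j (\<lambda>y. \<Sum>i\<in>I. G i y) x = (\<Sum>i\<in>I. pd_cl j (G i) x)"
  using assms unfolding pd_cl_def cl_differentiable_def
  by (intro ext) (simp add: pd_sum sum_apply)

lemma dirac_cong_open:
  assumes "open \<Omega>" "x \<in> \<Omega>" "\<And>y. y \<in> \<Omega> \<Longrightarrow> G y = H y"
  shows "dirac G x = dirac H x"
proof -
  have "pd j (\<lambda>y. G y A) x = pd j (\<lambda>y. H y A) x" for j A
    by (rule pd_cong_open[OF assms(1,2)]) (simp add: assms(3))
  then show ?thesis
    unfolding dirac_def by simp
qed

lemma dirac_add:
  assumes "cl_differentiable G x" "cl_differentiable H x"
  shows "dirac (\<lambda>y. G y + H y) x = dirac G x + dirac H x"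
  unfolding dirac_eq_sum_pd_cl pd_cl_add[OF assms] cl_mult_add_right by (simp add: sum.distrib)

lemma dirac_diff:
  assumes "cl_differentiable G x" "cl_differentiable H x"
  shows "dirac (\<lambda>y. G y - H y) x = dirac G x - dirac H x"
  unfolding dirac_eq_sum_pd_cl pd_cl_diff[OF assms] cl_mult_diff_right by (simp add: sum_subtractf)

lemma dirac_smul:
  assumes "a differentiable (at x)" "cl_differentiable G x"
  shows "dirac (\<lambda>y. cl_smul (a y) (G y)) x
    = cl_mult (\<Sum>j\<in>UNIV. cl_smul (pd j a x) (cl_e j)) (G x) + cl_smul (a x) (dirac G x)"
  unfolding dirac_eq_sum_pd_cl pd_cl_smul[OF assms] cl_mult_add_right cl_mult_smul_right
    sum.distrib cl_mult_sum_left cl_mult_smul_left cl_smul_sum ..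

lemma dirac_mult_const:
  fixes G :: "real ^ 'n::{finite,linorder} \<Rightarrow> 'n cl"
  assumes "cl_differentiable G x"
  shows "dirac (\<lambda>y. cl_mult (G y) K) x = cl_mult (dirac G x) K"
  unfolding dirac_eq_sum_pd_cl pd_cl_mult_const[OF assms] cl_mult_sum_left cl_mult_assoc ..

lemma cl_C1_on_scalar:
  assumes "C1_on \<Omega> a"
  shows "cl_C1_on \<Omega> (\<lambda>y. cl_scalar (a y))"
  unfolding cl_C1_on_def cl_scalar_def cl_blade_def
proof
  fix A :: "'n set"
  show "C1_on \<Omega> (\<lambda>y. if A = {} then a y else 0)"
    using assms by (cases "A = {}") (simp_all add: C1_on_const)
qed

lemma cl_C1_on_add: "cl_C1_on \<Omega> G \<Longrightarrow> cl_C1_on \<Omega> H \<Longrightarrow> cl_C1_on \<Omega> (\<lambda>y. G y + H y)"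
  unfolding cl_C1_on_def by (simp add: C1_on_add)

lemma cl_C1_on_smul: "C1_on \<Omega> a \<Longrightarrow> cl_C1_on \<Omega> G \<Longrightarrow> cl_C1_on \<Omega> (\<lambda>y. cl_smul (a y) (G y))"
  unfolding cl_C1_on_def cl_smul_def by (simp add: C1_on_mult)

lemma cl_C1_on_sum:
  "finite I \<Longrightarrow> (\<And>i. i \<in> I \<Longrightarrow> cl_C1_on \<Omega> (G i)) \<Longrightarrow> cl_C1_on \<Omega> (\<lambda>y. \<Sum>i\<in>I. G i y)"
  unfolding cl_C1_on_def sum_apply by (simp add: C1_on_sum)

lemma cl_C1_on_mult_const:
  fixes G :: "real ^ 'n::{finite,linorder} \<Rightarrow> 'n cl"
  shows "cl_C1_on \<Omega> G \<Longrightarrow> cl_C1_on \<Omega> (\<lambda>y. cl_mult (G y) K)"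
  unfolding cl_C1_on_def cl_mult_apply by (auto intro!: C1_on_sum C1_on_mult C1_on_const)

section \<open>The factorisation of the Schroedinger operator\<close>

definition cl_grad :: "(real ^ 'n::finite \<Rightarrow> complex) \<Rightarrow> real ^ 'n \<Rightarrow> 'n cl" where
  "cl_grad \<phi> x = (\<Sum>k\<in>UNIV. cl_smul (pd k \<phi> x) (cl_e k))"

lemma dirac_scalar:
  fixes \<phi> :: "real ^ 'n::{finite,linorder} \<Rightarrow> complex"
  shows "dirac (\<lambda>y. cl_scalar (\<phi> y)) x = cl_grad \<phi> x"
  unfolding dirac_eq_sum_pd_cl pd_cl_scalar cl_mult_scalar_right cl_grad_def ..

lemma dirac_smul_eq:
  assumes "\<phi> differentiable (at x)" "cl_differentiable G x"
  shows "dirac (\<lambda>y. cl_smul (\<phi> y) (G y)) x = cl_mult (cl_grad \<phi> x) (G x) + cl_smul (\<phi> x) (dirac G x)"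
  unfolding dirac_smul[OF assms] cl_grad_def ..

lemma cl_C1_on_grad:
  assumes "C2_on \<Omega> \<phi>"
  shows "cl_C1_on \<Omega> (cl_grad \<phi>)"
proof -
  have "cl_C1_on \<Omega> (\<lambda>y. cl_smul (pd k \<phi> y) (cl_e k))" for k
    using assms unfolding C2_on_def by (intro cl_C1_on_smul) (auto simp: cl_C1_on_def C1_on_const)
  then show ?thesis
    unfolding cl_grad_def[abs_def] by (intro cl_C1_on_sum) auto
qed

lemma sum_symmetric_cl_e_products:
  fixes c :: "'n::{finite,linorder} \<Rightarrow> 'n \<Rightarrow> complex"
  assumes symmetric: "\<And>j k. c j k = c k j"
  shows "(\<Sum>j\<in>UNIV. \<Sum>k\<in>UNIV. cl_smul (c j k) (cl_mult (cl_e j) (cl_e k))) = cl_scalar (- (\<Sum>j\<in>UNIV. c j j))"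
proof -
  let ?S = "\<Sum>j\<in>UNIV. \<Sum>k\<in>UNIV. cl_smul (c j k) (cl_mult (cl_e j) (cl_e k))"
  let ?T = "\<Sum>j\<in>UNIV. \<Sum>k\<in>UNIV. cl_smul (c j k) (cl_mult (cl_e k) (cl_e j))"
  have "?S = ?T"
    by (subst sum.swap) (simp add: symmetric)
  then have "?S + ?S = ?S + ?T"
    by (rule arg_cong)
  also have "\<dots>
      = (\<Sum>j\<in>UNIV. \<Sum>k\<in>UNIV. cl_smul (c j k) (cl_mult (cl_e j) (cl_e k) + cl_mult (cl_e k) (cl_e j)))"
    by (simp only: sum.distrib[symmetric] cl_smul_add)
  also have "\<dots> = (\<Sum>j\<in>UNIV. \<Sum>k\<in>UNIV. cl_scalar (if j = k then -2 * c j k else 0))"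
    by (simp add: cl_e_anticommute cl_smul_scalar) (intro sum.cong refl, simp add: mult.commute)
  also have "\<dots> = (\<Sum>j\<in>UNIV. cl_scalar (-2 * c j j))"
    by (simp add: cl_scalar_sum[symmetric] if_distrib cong: if_cong)
  also have "\<dots> = cl_scalar (- (\<Sum>j\<in>UNIV. c j j)) + cl_scalar (- (\<Sum>j\<in>UNIV. c j j))"
    by (simp add: cl_scalar_sum[symmetric] cl_scalar_add[symmetric] sum_distrib_left[symmetric] sum_negf)
  finally show ?thesis
    by (simp add: fun_eq_iff)
qed

text \<open>The mixed terms cancel by the symmetry of second derivatives and the anticommutation of the
  generators.\<close>

lemma dirac_cl_grad:
  assumes "open \<Omega>" "C2_on \<Omega> \<phi>" "x \<in> \<Omega>"
  shows "dirac (cl_grad \<phi>) x = cl_scalar (- laplacian (\<phi> :: real ^ 'n::{finite,linorder} \<Rightarrow> complex) x)"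
proof -
  have \<phi>: "\<forall>y\<in>\<Omega>. \<phi> differentiable (at y)" and pd_\<phi>: "\<And>k. pd k \<phi> differentiable (at x)"
    using assms(2,3) unfolding C2_on_def C1_on_def by blast+
  have "pd_cl j (cl_grad \<phi>) x = (\<Sum>k\<in>UNIV. cl_smul (pd j (pd k \<phi>) x) (cl_e k))" for j
  proof -
    have "pd_cl j (cl_grad \<phi>) x = (\<Sum>k\<in>UNIV. pd_cl j (\<lambda>y. cl_smul (pd k \<phi> y) (cl_e k)) x)"
      unfolding cl_grad_def[abs_def]
      by (intro pd_cl_sum) (auto intro!: cl_differentiable_smul pd_\<phi> cl_differentiable_const)
    also have "\<dots> = (\<Sum>k\<in>UNIV. cl_smul (pd j (pd k \<phi>) x) (cl_e k))"
      by (simp add: pd_cl_smul[OF pd_\<phi> cl_differentiable_const] pd_cl_const)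
    finally show ?thesis .
  qed
  then have "dirac (cl_grad \<phi>) x = (\<Sum>j\<in>UNIV. \<Sum>k\<in>UNIV. cl_smul (pd j (pd k \<phi>) x) (cl_mult (cl_e j) (cl_e k)))"
    unfolding dirac_eq_sum_pd_cl by (simp add: cl_mult_sum_right cl_mult_smul_right)
  also have "\<dots> = cl_scalar (- (\<Sum>j\<in>UNIV. pd j (pd j \<phi>) x))"
    by (intro sum_symmetric_cl_e_products pd_commute[OF assms(1,3) \<phi> pd_\<phi> pd_\<phi>])
  finally show ?thesis
    unfolding laplacian_def .
qed

lemma dirac_riccati_transform:
  fixes F :: "real ^ 'n::{finite,linorder} \<Rightarrow> 'n cl"
  assumes "open \<Omega>" "C2_on \<Omega> \<phi>" "cl_C1_on \<Omega> F" "x \<in> \<Omega>"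
    and "cl_scalar (- laplacian \<phi> x) + cl_mult (cl_scalar (\<phi> x)) (dirac F x - cl_mult (F x) (F x))
         = cl_scalar (lam\<^sup>2 * \<phi> x)"
  shows "dirac (\<lambda>y. cl_grad \<phi> y + cl_smul (\<phi> y) (F y)) x
    = cl_scalar (lam\<^sup>2 * \<phi> x) + cl_mult (cl_grad \<phi> x + cl_smul (\<phi> x) (F x)) (F x)"
proof -
  have \<phi>: "\<phi> differentiable (at x)" and F: "cl_differentiable F x"
    using assms(2-4) cl_C1_on_differentiable unfolding C2_on_def C1_on_def by blast+
  have "dirac (\<lambda>y. cl_grad \<phi> y + cl_smul (\<phi> y) (F y)) x
      = cl_scalar (- laplacian \<phi> x) + cl_mult (cl_grad \<phi> x) (F x) + cl_smul (\<phi> x) (dirac F x)"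
    using cl_C1_on_grad[OF assms(2)] assms(4)
    by (simp add: dirac_add cl_C1_on_differentiable cl_differentiable_smul \<phi> F dirac_smul_eq
        dirac_cl_grad[OF assms(1,2,4)] add.assoc)
  also have "\<dots> = cl_mult (cl_grad \<phi> x) (F x) + (cl_scalar (- laplacian \<phi> x) + cl_smul (\<phi> x) (dirac F x))"
    by (simp only: ac_simps)
  also have "cl_scalar (- laplacian \<phi> x) + cl_smul (\<phi> x) (dirac F x)
      = cl_scalar (lam\<^sup>2 * \<phi> x) + cl_smul (\<phi> x) (cl_mult (F x) (F x))"
    using assms(5) unfolding cl_mult_scalar_left cl_smul_diff by (simp add: diff_eq_eq add_diff_eq)
  finally show ?thesis
    unfolding cl_mult_add_left cl_mult_smul_left by (simp only: ac_simps)
qed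

text \<open>Read \<open>W - a F\<close> as \<open>\<partial>a\<close> and \<open>dW\<close> as \<open>\<partial>W\<close>: the first summand is then \<open>\<partial>g\<close> for
  \<open>g = (a + \<sigma> \<lambda>\<^sup>-\<^sup>1 W E) / 2\<close>, the second factor of \<open>g (F - \<sigma> \<lambda> E)\<close>.\<close>

lemma twisted_dirac_factor_identity:
  fixes E F W dW :: "'n::{finite,linorder} cl"
  assumes "cl_mult E E = cl_scalar 1" "cl_mult E F = - cl_mult F E" "lam \<noteq> 0" "\<sigma>\<^sup>2 = 1"
    and "dW = cl_scalar (lam\<^sup>2 * a) + cl_mult W F"
  shows "cl_smul (1/2) (W - cl_smul a F + cl_smul (\<sigma>/lam) (cl_mult dW E))
    + cl_mult (cl_smul (1/2) (cl_scalar a + cl_smul (\<sigma>/lam) (cl_mult W E))) (F - cl_smul (\<sigma> * lam) E) = 0"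
proof -
  have WEF: "cl_mult (cl_mult W E) F = - cl_mult (cl_mult W F) E"
    unfolding cl_mult_assoc assms(2) cl_mult_minus_right ..
  have WEE: "cl_mult (cl_mult W E) E = W"
    unfolding cl_mult_assoc assms(1) cl_mult_scalar_right by (simp add: cl_smul_def)
  have expand: "cl_mult (cl_scalar a + cl_smul (\<sigma>/lam) (cl_mult W E)) (F - cl_smul (\<sigma> * lam) E)
      = cl_smul a F - cl_smul (\<sigma> * lam * a) E - cl_smul (\<sigma>/lam) (cl_mult (cl_mult W F) E) - cl_smul (\<sigma>\<^sup>2) W"
    unfolding cl_mult_add_left cl_mult_diff_right cl_mult_scalar_left cl_mult_smul_left
      cl_mult_smul_right WEF WEE
    using assms(3) by (simp add: cl_smul_def fun_eq_iff field_simps power2_eq_square)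
  show ?thesis
    unfolding cl_mult_smul_left expand
    unfolding assms(5) cl_mult_add_left cl_mult_scalar_left
    using assms(3,4) by (simp add: cl_smul_def fun_eq_iff field_simps power2_eq_square)
qed

lemma twisted_dirac_difference_eq_zero:
  fixes E F d k :: "'n::{finite,linorder} cl"
  assumes "cl_mult E E = cl_scalar 1" "lam \<noteq> 0"
    and "d + cl_mult k (F - cl_smul lam E) = 0" "d + cl_mult k (F + cl_smul lam E) = 0"
  shows "k = 0"
proof -
  have "cl_mult k (F + cl_smul lam E) = cl_mult k (F - cl_smul lam E)"
    using assms(3,4) by (metis add_left_cancel)
  then have "cl_mult k ((F + cl_smul lam E) - (F - cl_smul lam E)) = 0"
    unfolding cl_mult_diff_right by simp
  moreover have "(F + cl_smul lam E) - (F - cl_smul lam E) = cl_smul (2 * lam) E"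
    by (simp add: cl_smul_def fun_eq_iff)
  ultimately have "cl_smul (2 * lam) (cl_mult k E) = 0"
    by (simp add: cl_mult_smul_right)
  then have "cl_mult k E = 0"
    using assms(2) by (simp add: cl_smul_def fun_eq_iff)
  then have "cl_mult (cl_mult k E) E = 0"
    by simp
  then show ?thesis
    unfolding cl_mult_assoc assms(1) cl_mult_scalar_right by (simp add: cl_smul_def fun_eq_iff)
qed

lemma dirac_smul_const:
  assumes "cl_differentiable G x"
  shows "dirac (\<lambda>y. cl_smul c (G y)) x = cl_smul c (dirac G x)"
  using dirac_smul[of "\<lambda>y. c" x G] assms by simp

lemma twisted_dirac_half_solution:
  fixes F :: "real ^ 'n::{finite,linorder} \<Rightarrow> 'n cl"
  assumes "open \<Omega>" "C2_on \<Omega> \<phi>" "cl_C1_on \<Omega> F" "lam \<noteq> 0" "\<sigma>\<^sup>2 = 1"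
    and "cl_mult E E = cl_scalar 1" "\<And>x. cl_mult E (F x) = - cl_mult (F x) E"
    and "\<forall>x\<in>\<Omega>. cl_scalar (- laplacian \<phi> x) + cl_mult (cl_scalar (\<phi> x)) (dirac F x - cl_mult (F x) (F x))
           = cl_scalar (lam\<^sup>2 * \<phi> x)"
  defines "W \<equiv> \<lambda>y. cl_grad \<phi> y + cl_smul (\<phi> y) (F y)"
  defines "g \<equiv> \<lambda>y. cl_smul (1/2) (cl_scalar (\<phi> y) + cl_smul (\<sigma>/lam) (cl_mult (W y) E))"
  shows "cl_C1_on \<Omega> g" and "\<forall>x\<in>\<Omega>. dirac g x + cl_mult (g x) (F x - cl_smul (\<sigma> * lam) E) = 0"
proof -
  have \<phi>: "C1_on \<Omega> \<phi>"
    using assms(2) unfolding C2_on_def by blast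
  have W: "cl_C1_on \<Omega> W"
    unfolding W_def using \<phi> by (intro cl_C1_on_add cl_C1_on_smul cl_C1_on_grad assms(2,3))
  have const: "C1_on \<Omega> (\<lambda>y. c)" for c :: complex
    by (rule C1_on_const)
  show "cl_C1_on \<Omega> g"
    unfolding g_def using W \<phi>
    by (intro cl_C1_on_smul[OF const] cl_C1_on_add cl_C1_on_scalar cl_C1_on_mult_const)
  show "\<forall>x\<in>\<Omega>. dirac g x + cl_mult (g x) (F x - cl_smul (\<sigma> * lam) E) = 0"
  proof
    fix x
    assume "x \<in> \<Omega>"
    then have WE: "cl_differentiable (\<lambda>y. cl_mult (W y) E) x"
      and \<phi>_x: "\<phi> differentiable (at x)"
      using cl_differentiable_mult_const cl_C1_on_differentiable[OF W] C1_on_differentiable[OF \<phi>]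
      by blast+
    have dirac_g: "dirac g x = cl_smul (1/2) (cl_grad \<phi> x + cl_smul (\<sigma>/lam) (cl_mult (dirac W x) E))"
      unfolding g_def
      using WE \<phi>_x cl_C1_on_differentiable[OF W \<open>x \<in> \<Omega>\<close>]
      by (simp add: dirac_smul_const dirac_add dirac_scalar dirac_mult_const cl_differentiable_add
          cl_differentiable_scalar cl_differentiable_smul)
    have grad: "cl_grad \<phi> x = W x - cl_smul (\<phi> x) (F x)"
      unfolding W_def by simp
    have "dirac W x = cl_scalar (lam\<^sup>2 * \<phi> x) + cl_mult (W x) (F x)"
      unfolding W_def using assms(8) \<open>x \<in> \<Omega>\<close>
      by (intro dirac_riccati_transform[OF assms(1-3)]) auto
    from twisted_dirac_factor_identity[OF assms(6) assms(7)[of x] assms(4,5) this]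
    show "dirac g x + cl_mult (g x) (F x - cl_smul (\<sigma> * lam) E) = 0"
      unfolding dirac_g grad unfolding g_def .
  qed
qed

lemma twisted_dirac_split_exists:
  fixes F :: "real ^ 'n::{finite,linorder} \<Rightarrow> 'n cl"
  assumes "open \<Omega>" "C2_on \<Omega> \<phi>" "cl_C1_on \<Omega> F" "lam \<noteq> 0"
    and "cl_mult E E = cl_scalar 1" "\<And>x. cl_mult E (F x) = - cl_mult (F x) E"
    and "\<forall>x\<in>\<Omega>. cl_scalar (- laplacian \<phi> x) + cl_mult (cl_scalar (\<phi> x)) (dirac F x - cl_mult (F x) (F x))
           = cl_scalar (lam\<^sup>2 * \<phi> x)"
  shows "\<exists>g h. cl_C1_on \<Omega> g \<and> cl_C1_on \<Omega> h
    \<and> (\<forall>x\<in>\<Omega>. dirac g x + cl_mult (g x) (F x - cl_smul lam E) = 0)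
    \<and> (\<forall>x\<in>\<Omega>. dirac h x + cl_mult (h x) (F x + cl_smul lam E) = 0)
    \<and> (\<forall>x\<in>\<Omega>. g x + h x = cl_scalar (\<phi> x))"
proof -
  define W where "W y = cl_grad \<phi> y + cl_smul (\<phi> y) (F y)" for y
  define g where "g \<sigma> y = cl_smul (1/2) (cl_scalar (\<phi> y) + cl_smul (\<sigma>/lam) (cl_mult (W y) E))" for \<sigma> y
  have sol: "cl_C1_on \<Omega> (g \<sigma>)" "\<forall>x\<in>\<Omega>. dirac (g \<sigma>) x + cl_mult (g \<sigma> x) (F x - cl_smul (\<sigma> * lam) E) = 0"
    if "\<sigma>\<^sup>2 = 1" for \<sigma>
    using twisted_dirac_half_solution[OF assms(1-4) that assms(5-7)] unfolding g_def W_def by auto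
  have flip: "F x - cl_smul (- 1 * lam) E = F x + cl_smul lam E" for x
    by (simp add: cl_smul_def fun_eq_iff)
  have "(1::complex)\<^sup>2 = 1" "(- 1::complex)\<^sup>2 = 1"
    by simp_all
  note plus = sol[OF this(1), simplified] and minus = sol[OF this(2), unfolded flip]
  have "g 1 x + g (- 1) x = cl_scalar (\<phi> x)" for x
    unfolding g_def by (simp add: cl_smul_def fun_eq_iff field_simps)
  with plus minus show ?thesis
    by blast
qed

lemma twisted_dirac_split_unique:
  fixes F :: "real ^ 'n::{finite,linorder} \<Rightarrow> 'n cl"
  assumes "open \<Omega>" "cl_mult E E = cl_scalar 1" "lam \<noteq> 0"
    and "cl_C1_on \<Omega> g" "cl_C1_on \<Omega> h" "cl_C1_on \<Omega> g'" "cl_C1_on \<Omega> h'"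
    and "\<forall>x\<in>\<Omega>. dirac g x + cl_mult (g x) (F x - cl_smul lam E) = 0"
    and "\<forall>x\<in>\<Omega>. dirac h x + cl_mult (h x) (F x + cl_smul lam E) = 0"
    and "\<forall>x\<in>\<Omega>. dirac g' x + cl_mult (g' x) (F x - cl_smul lam E) = 0"
    and "\<forall>x\<in>\<Omega>. dirac h' x + cl_mult (h' x) (F x + cl_smul lam E) = 0"
    and "\<forall>x\<in>\<Omega>. g' x + h' x = g x + h x"
    and "x \<in> \<Omega>"
  shows "g' x = g x \<and> h' x = h x"
proof -
  have h_diff: "h' y - h y = - (g' y - g y)" if "y \<in> \<Omega>" for y
    using assms(12) that by (simp add: algebra_simps eq_diff_eq)
  have diff: "cl_differentiable u x" if "cl_C1_on \<Omega> u" for u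
    using cl_C1_on_differentiable[OF that assms(13)] .
  have "dirac h' x - dirac h x = dirac (\<lambda>y. h' y - h y) x"
    using diff assms(5,7) by (simp add: dirac_diff)
  also have "\<dots> = dirac (\<lambda>y. g y - g' y) x"
    using h_diff by (intro dirac_cong_open[OF assms(1,13)]) simp
  also have "\<dots> = - (dirac g' x - dirac g x)"
    using diff assms(4,6) by (simp add: dirac_diff)
  finally have dirac_h_diff: "dirac h' x - dirac h x = - (dirac g' x - dirac g x)" .
  have "(dirac h' x - dirac h x) + cl_mult (h' x - h x) (F x + cl_smul lam E) = 0"
    using assms(9,11,13) by (simp add: cl_mult_diff_left flip: add_diff_add)
  then have "(dirac g' x - dirac g x) + cl_mult (g' x - g x) (F x + cl_smul lam E) = 0"
    unfolding dirac_h_diff h_diff[OF assms(13)] cl_mult_minus_left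
    by (simp only: minus_add_distrib[symmetric] neg_equal_0_iff_equal)
  moreover have "(dirac g' x - dirac g x) + cl_mult (g' x - g x) (F x - cl_smul lam E) = 0"
    using assms(8,10,13) by (simp add: cl_mult_diff_left flip: add_diff_add)
  ultimately have "g' x - g x = 0"
    using twisted_dirac_difference_eq_zero[OF assms(2,3)] by blast
  then show ?thesis
    using h_diff[OF assms(13)] by simp
qed

lemma cl_C1_on_vec:
  assumes "\<forall>j. C1_on \<Omega> (\<lambda>x. complex_of_real (f x $ j))"
  shows "cl_C1_on \<Omega> (\<lambda>x. cl_vec (f x))"
  unfolding cl_vec_eq_sum using assms
  by (intro cl_C1_on_sum cl_C1_on_smul) (auto simp: cl_C1_on_def C1_on_const)

theorem corollary7p2:
  fixes \<Omega> :: "(real, 'n::{finite,linorder}) vec set"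
    and lam :: complex
    and f :: "(real, 'n) vec \<Rightarrow> (real, 'n) vec"
    and \<phi> :: "(real, 'n) vec \<Rightarrow> complex"
  assumes "even CARD('n)" and "odd (CARD('n) div 2)"
    and "open \<Omega>"
    and "lam \<noteq> 0"
    and "\<forall>j. C1_on \<Omega> (\<lambda>x. complex_of_real (f x $ j))"
    and "C2_on \<Omega> \<phi>"
    and "\<forall>x\<in>\<Omega>. cl_scalar (- laplacian \<phi> x)
            + cl_mult (cl_scalar (\<phi> x))
                (dirac (\<lambda>y. cl_vec (f y)) x - cl_mult (cl_vec (f x)) (cl_vec (f x)))
          = cl_scalar (lam ^ 2 * \<phi> x)"
  shows "\<exists>g h. cl_C1_on \<Omega> g \<and> cl_C1_on \<Omega> h
           \<and> (\<forall>x\<in>\<Omega>. dirac g x + cl_mult (g x) (cl_vec (f x) - cl_blade (lam * \<i>) UNIV) = 0)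
           \<and> (\<forall>x\<in>\<Omega>. dirac h x + cl_mult (h x) (cl_vec (f x) + cl_blade (lam * \<i>) UNIV) = 0)
           \<and> (\<forall>x\<in>\<Omega>. g x + h x = cl_scalar (\<phi> x))
           \<and> (\<forall>g' h'. cl_C1_on \<Omega> g' \<and> cl_C1_on \<Omega> h'
                \<and> (\<forall>x\<in>\<Omega>. dirac g' x + cl_mult (g' x) (cl_vec (f x) - cl_blade (lam * \<i>) UNIV) = 0)
                \<and> (\<forall>x\<in>\<Omega>. dirac h' x + cl_mult (h' x) (cl_vec (f x) + cl_blade (lam * \<i>) UNIV) = 0)
                \<and> (\<forall>x\<in>\<Omega>. g' x + h' x = cl_scalar (\<phi> x))
                \<longrightarrow> (\<forall>x\<in>\<Omega>. g' x = g x \<and> h' x = h x))"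
proof -
  have blade: "cl_blade (lam * \<i>) UNIV = cl_smul lam cl_ieN"
    unfolding cl_ieN_def cl_smul_def cl_blade_def by (rule ext) simp
  have ieN: "cl_mult cl_ieN cl_ieN = (cl_scalar 1 :: 'n cl)"
    "\<And>x. cl_mult cl_ieN (cl_vec (f x)) = - cl_mult (cl_vec (f x)) cl_ieN"
    using cl_ieN_square[OF assms(1,2)] cl_ieN_mult_vec[OF assms(1)] by blast+
  obtain g h where g: "cl_C1_on \<Omega> g" "\<forall>x\<in>\<Omega>. dirac g x + cl_mult (g x) (cl_vec (f x) - cl_smul lam cl_ieN) = 0"
    and h: "cl_C1_on \<Omega> h" "\<forall>x\<in>\<Omega>. dirac h x + cl_mult (h x) (cl_vec (f x) + cl_smul lam cl_ieN) = 0"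
    and sum: "\<forall>x\<in>\<Omega>. g x + h x = cl_scalar (\<phi> x)"
    using twisted_dirac_split_exists[OF assms(3,6) cl_C1_on_vec[OF assms(5)] assms(4) ieN assms(7)]
    by blast
  have "\<forall>x\<in>\<Omega>. g' x = g x \<and> h' x = h x"
    if "cl_C1_on \<Omega> g'" "cl_C1_on \<Omega> h'"
      and "\<forall>x\<in>\<Omega>. dirac g' x + cl_mult (g' x) (cl_vec (f x) - cl_smul lam cl_ieN) = 0"
      and "\<forall>x\<in>\<Omega>. dirac h' x + cl_mult (h' x) (cl_vec (f x) + cl_smul lam cl_ieN) = 0"
      and "\<forall>x\<in>\<Omega>. g' x + h' x = cl_scalar (\<phi> x)" for g' h'
    using twisted_dirac_split_unique[OF assms(3) ieN(1) assms(4) g(1) h(1) that(1,2) g(2) h(2) that(3,4)]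
      that(5) sum by simp
  with g h sum show ?thesis
    unfolding blade by blast
qed

end
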